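(* For any positive integers $q$ and $k$ with $k\ge2$ and any $A\subseteq\mathbb{N}$, the Cayley graph $G(\mathbb{Z}^2,\pm AD_{q,k})$ is isomorphic to a subgraph of the graph with vertex set $\mathbb{R}^2$ in which two points are adjacent if their Euclidean distance lies in $A$.
   Context: For a set $C'\subseteq\mathbb{Z}^2\setminus\{0\}$ with $C'=-C'$, $G(\mathbb{Z}^2,C')$ is the Cayley graph with vertex set $\mathbb{Z}^2$ in which $u,v$ are adjacent iff $v-u\in C'$. For positive integers $q,k$ with $k\ge2$, let $X_{q,k}=\prod_{j=1}^{k-1}(q^{k+j}+q^{k-j}+1)$ and let $D_{q,k}\subseteq\mathbb{Z}^2$ consist of the points $\frac{X_{q,k}}{q^{k+j}+q^{k-j}+1}\left(q^{k+j}-q^{k-j},\,-q^j-2q^k\right)$ for $j=1,\ldots,k-1$. $\pm AD_{q,k}$ is the set of all $\pm ad$ with $a\in A$, $d\in D_{q,k}$. *)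

theory Defs
  imports Complex_Main
begin

definition Xqk :: "int \<Rightarrow> nat \<Rightarrow> int" where
  "Xqk q k = (\<Prod>j\<in>{1..k-1}. q ^ (k + j) + q ^ (k - j) + 1)"

text \<open>The set D_{q,k} of lattice points (the division is exact).\<close>
definition Dqk :: "int \<Rightarrow> nat \<Rightarrow> (int \<times> int) set" where
  "Dqk q k = {(Xqk q k div (q ^ (k + j) + q ^ (k - j) + 1) * (q ^ (k + j) - q ^ (k - j)),
               Xqk q k div (q ^ (k + j) + q ^ (k - j) + 1) * (- (q ^ j) - 2 * q ^ k)) | j.
               1 \<le> j \<and> j \<le> k - 1}"

definition pmAD :: "nat set \<Rightarrow> (int \<times> int) set \<Rightarrow> (int \<times> int) set" where
  "pmAD A D = {(s * int a * x, s * int a * y) | s a x y.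
                 s \<in> {1, -1} \<and> a \<in> A \<and> (x, y) \<in> D}"

definition cayley_adj :: "(int \<times> int) set \<Rightarrow> int \<times> int \<Rightarrow> int \<times> int \<Rightarrow> bool" where
  "cayley_adj C u v \<longleftrightarrow> (fst v - fst u, snd v - snd u) \<in> C"

definition eucl_dist2 :: "real \<times> real \<Rightarrow> real \<times> real \<Rightarrow> real" where
  "eucl_dist2 x y = sqrt ((fst x - fst y)^2 + (snd x - snd y)^2)"

definition dist_adj :: "nat set \<Rightarrow> real \<times> real \<Rightarrow> real \<times> real \<Rightarrow> bool" where
  "dist_adj A x y \<longleftrightarrow> eucl_dist2 x y \<in> real ` A"

end

theory Submission
  imports Defs
begin

text \<open>With m = q^k, every d = (x, y) in D_{q,k} satisfies m x^2 + x y + m y^2 = m X_{q,k}^2.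
  Since m > 1/2, the form x^2 + x y / m + y^2 is positive definite and the shear
  (x, y) \<mapsto> (x + y / (2 m), sqrt (1 - 1 / (4 m^2)) y) turns it into the squared Euclidean norm.
  Dividing by X_{q,k} therefore gives an injective linear map that sends every difference
  \<plusminus>a d of adjacent vertices to a vector of length a.\<close>

definition qform :: "'a::comm_ring_1 \<Rightarrow> 'a \<times> 'a \<Rightarrow> 'a" where
  "qform m p = m * (fst p)^2 + fst p * snd p + m * (snd p)^2"

lemma qform_scale: "qform m (c * x, c * y) = c^2 * qform m (x, y)"
  by (simp add: qform_def power2_eq_square algebra_simps)

lemma qform_of_int:
  "qform (of_int m) (of_int x, of_int y) = (of_int (qform m (x, y)) :: 'a::comm_ring_1)"
  by (simp add: qform_def)

text \<open>With b = q^(k-j) and t = q^j, the j-th point of D_{q,k} is a multiple of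
  (b t^2 - b, -t - 2 b t), and the divisor in its coefficient is b t^2 + b + 1.\<close>
lemma qform_generator:
  fixes b t :: "'a::comm_ring_1"
  shows "qform (b * t) (b * t * t - b, - t - 2 * (b * t)) = b * t * (b * t * t + b + 1)^2"
  by (simp add: qform_def power2_eq_square algebra_simps)

lemma qform_Dqk:
  fixes q :: int
  assumes "d \<in> Dqk q k"
  shows "qform (q ^ k) d = q ^ k * (Xqk q k)^2"
proof -
  from assms obtain j where j: "1 \<le> j" "j \<le> k - 1"
    and d: "d = (Xqk q k div (q ^ (k + j) + q ^ (k - j) + 1) * (q ^ (k + j) - q ^ (k - j)),
                 Xqk q k div (q ^ (k + j) + q ^ (k - j) + 1) * (- (q ^ j) - 2 * q ^ k))"
    unfolding Dqk_def by blast
  define b where "b = q ^ (k - j)"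
  define t where "t = q ^ j"
  have qk: "q ^ k = b * t"
    unfolding b_def t_def power_add [symmetric] using j by simp
  have qkj: "q ^ (k + j) = b * t * t"
    using power_add [of q k j] unfolding qk t_def [symmetric] .
  have N: "q ^ (k + j) + q ^ (k - j) + 1 = b * t * t + b + 1"
    unfolding qkj b_def ..
  define c where "c = Xqk q k div (b * t * t + b + 1)"
  have "b * t * t + b + 1 dvd Xqk q k"
    unfolding Xqk_def N [symmetric] by (rule dvd_prodI) (use j in auto)
  then have X: "Xqk q k = c * (b * t * t + b + 1)"
    unfolding c_def by simp
  have "d = (c * (b * t * t - b), c * (- t - 2 * (b * t)))"
    unfolding d N c_def qkj qk b_def [symmetric] t_def [symmetric] ..
  then have "qform (q ^ k) d = c^2 * qform (b * t) (b * t * t - b, - t - 2 * (b * t))"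
    by (simp add: qk qform_scale)
  also have "\<dots> = q ^ k * (Xqk q k)^2"
    unfolding qform_generator X qk by (simp add: power_mult_distrib)
  finally show ?thesis .
qed

lemma qform_pmAD_Dqk:
  fixes q :: int
  assumes "d \<in> pmAD A (Dqk q k)"
  obtains a where "a \<in> A" "qform (q ^ k) d = (int a)^2 * (q ^ k * (Xqk q k)^2)"
proof -
  from assms obtain s a x y where s: "s \<in> {1, -1}" and "a \<in> A" "(x, y) \<in> Dqk q k"
    and d: "d = (s * int a * x, s * int a * y)"
    unfolding pmAD_def by blast
  have "qform (q ^ k) d = (s * int a)^2 * qform (q ^ k) (x, y)"
    unfolding d by (rule qform_scale)
  also have "\<dots> = (int a)^2 * (q ^ k * (Xqk q k)^2)"
    using s qform_Dqk [OF \<open>(x, y) \<in> Dqk q k\<close>] by (auto simp: power_mult_distrib)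
  finally show thesis
    using that \<open>a \<in> A\<close> by blast
qed

lemma Xqk_pos:
  fixes q :: int
  assumes "q > 0"
  shows "Xqk q k > 0"
  unfolding Xqk_def using assms by (intro prod_pos) (auto intro!: add_pos_pos)

lemma eucl_dist2_commute: "eucl_dist2 x y = eucl_dist2 y x"
  by (simp add: eucl_dist2_def power2_commute)

definition shear :: "real \<Rightarrow> real \<times> real \<Rightarrow> real \<times> real" where
  "shear m p = (fst p + snd p / (2 * m), sqrt (1 - 1 / (4 * m^2)) * snd p)"

lemma shear_factor_pos:
  assumes "m > 1/2"
  shows "sqrt (1 - 1 / (4 * m^2)) > 0"
proof -
  have "(2 * m)^2 > 1^2"
    using assms by (intro power_strict_mono) auto
  then show ?thesis
    by (simp add: power_mult_distrib divide_less_eq_1)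
qed

lemma inj_shear:
  assumes "m > 1/2"
  shows "inj (shear m)"
proof (rule injI)
  fix p p' assume "shear m p = shear m p'"
  then show "p = p'"
    using shear_factor_pos [OF assms] assms unfolding shear_def
    by (cases p; cases p') auto
qed

lemma eucl_dist2_shear:
  assumes "m > 1/2"
  shows "eucl_dist2 (shear m (x, y)) (shear m (x', y')) = sqrt (qform m (x - x', y - y') / m)"
proof -
  have "(sqrt (1 - 1 / (4 * m^2)))^2 = 1 - 1 / (4 * m^2)"
    using shear_factor_pos [OF assms] by (simp add: sqrt_le_D less_imp_le)
  then show ?thesis
    using assms unfolding eucl_dist2_def shear_def qform_def
    by (simp add: field_simps power2_eq_square)
qed

theorem lemma4:
  fixes q :: int and k :: nat and A :: "nat set"
  assumes "q > 0" and "k \<ge> 2"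
  shows "\<exists>f :: int \<times> int \<Rightarrow> real \<times> real. inj f \<and>
           (\<forall>u v. cayley_adj (pmAD A (Dqk q k) - {(0, 0)}) u v \<longrightarrow> dist_adj A (f u) (f v))"
proof -
  define m :: real where "m = of_int (q ^ k)"
  define X :: real where "X = of_int (Xqk q k)"
  have "m \<ge> 1" "X > 0"
    unfolding m_def X_def using assms(1) Xqk_pos [OF assms(1)] by simp_all
  then have m: "m > 1/2" by simp
  define f :: "int \<times> int \<Rightarrow> real \<times> real"
    where "f = shear m \<circ> (\<lambda>(x, y). (of_int x / X, of_int y / X))"
  have "inj f"
    unfolding f_def using \<open>X > 0\<close>
    by (intro inj_compose inj_shear m) (auto intro!: injI)
  moreover have "dist_adj A (f u) (f v)"
    if "cayley_adj (pmAD A (Dqk q k) - {(0, 0)}) u v" for u v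
  proof -
    define d where "d = (fst v - fst u, snd v - snd u)"
    have "d \<in> pmAD A (Dqk q k)"
      using that unfolding cayley_adj_def d_def by simp
    then obtain a where "a \<in> A" and a: "qform (q ^ k) d = (int a)^2 * (q ^ k * (Xqk q k)^2)"
      by (rule qform_pmAD_Dqk)
    have "eucl_dist2 (f v) (f u) = sqrt (qform m (of_int (fst d) / X, of_int (snd d) / X) / m)"
      unfolding f_def d_def by (simp add: case_prod_beta eucl_dist2_shear [OF m] diff_divide_distrib)
    also have "\<dots> = sqrt (of_int (qform (q ^ k) d) / (m * X^2))"
      using qform_scale [of m "1 / X" "of_int (fst d)" "of_int (snd d)"]
        qform_of_int [where 'a = real, of "q ^ k" "fst d" "snd d"]
      by (simp add: m_def power_divide mult.commute)
    also have "\<dots> = real a"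
      using assms(1) \<open>X > 0\<close> unfolding a m_def X_def by simp
    finally show ?thesis
      unfolding dist_adj_def using \<open>a \<in> A\<close> by (simp add: eucl_dist2_commute)
  qed
  ultimately show ?thesis by blast
qed

end
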